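(* Let $\sigma:\mathbb{R}\to\mathbb{R}$ be an increasing odd homeomorphism. The group $\Gamma_2(\sigma)$ generated by $h_\sigma^2$ and $v_\sigma^2$ is a free group.
   Context: $h_\sigma(x,y)=(x+\sigma^{-1}(y),y)$ and $v_\sigma(x,y)=(x,\sigma(x)+y)$ are bijections of $\mathbb{R}^2$; the group operation is composition. *)

theory Defs
  imports "HOL-Analysis.Analysis"
begin

definition h_sigma :: "(real \<Rightarrow> real) \<Rightarrow> real \<times> real \<Rightarrow> real \<times> real" where
  "h_sigma \<sigma> = (\<lambda>(x, y). (x + inv \<sigma> y, y))"

definition v_sigma :: "(real \<Rightarrow> real) \<Rightarrow> real \<times> real \<Rightarrow> real \<times> real" where
  "v_sigma \<sigma> = (\<lambda>(x, y). (x, \<sigma> x + y))"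

text \<open>Words in two generators: a letter (g, e) is generator g (True = first, False = second)
  with exponent +1 if e, and -1 otherwise.\<close>

definition letter_eval :: "('a \<Rightarrow> 'a) \<Rightarrow> ('a \<Rightarrow> 'a) \<Rightarrow> bool \<times> bool \<Rightarrow> ('a \<Rightarrow> 'a)" where
  "letter_eval a b l = (let g = (if fst l then a else b) in if snd l then g else inv g)"

definition word_eval :: "('a \<Rightarrow> 'a) \<Rightarrow> ('a \<Rightarrow> 'a) \<Rightarrow> (bool \<times> bool) list \<Rightarrow> ('a \<Rightarrow> 'a)" where
  "word_eval a b w = foldr (\<circ>) (map (letter_eval a b) w) id"

definition reduced_word :: "(bool \<times> bool) list \<Rightarrow> bool" where
  "reduced_word w \<longleftrightarrow>
     (\<forall>i. Suc i < length w \<longrightarrow> \<not> (fst (w ! i) = fst (w ! Suc i) \<and> snd (w ! i) \<noteq> snd (w ! Suc i)))"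

definition freely_generate :: "('a \<Rightarrow> 'a) \<Rightarrow> ('a \<Rightarrow> 'a) \<Rightarrow> bool" where
  "freely_generate a b \<longleftrightarrow> bij a \<and> bij b \<and>
     (\<forall>w. w \<noteq> [] \<and> reduced_word w \<longrightarrow> word_eval a b w \<noteq> id)"

end

theory Submission
  imports Defs
begin

(* Ping-pong. Writing a point as (\<sigma> x, y), cut out four disjoint sectors of the plane,
   one per letter: |y| < |\<sigma> x| for the powers of h, |\<sigma> x| < |y| for those of v, and in
   each case x y > 0 or x y < 0 according to the sign of the exponent. In the coordinates
   (x, \<sigma>^-1 y), resp. (\<sigma> x, y), the maps h^(\<plusminus>2) and v^(\<plusminus>2) become the linear shears
   a \<mapsto> a \<plusminus> 2 b, and as \<sigma> is odd and increasing these coordinate changes leave the sectors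
   invariant. Since |a \<plusminus> 2 b| > |b| as soon as |a| < |b|, each shear throws every sector but
   that of its inverse letter into its own sector, so a nonempty reduced word moves points between
   disjoint sets and cannot be the identity. *)

lemma word_eval_Nil [simp]: "word_eval a b [] = id"
  by (simp add: word_eval_def)

lemma word_eval_Cons [simp]: "word_eval a b (l # w) = letter_eval a b l \<circ> word_eval a b w"
  by (simp add: word_eval_def)

lemma reduced_word_Cons_Cons:
  "reduced_word (l # l' # w) \<longleftrightarrow> l' \<noteq> (fst l, \<not> snd l) \<and> reduced_word (l' # w)"
  unfolding reduced_word_def by (simp add: All_less_Suc2 prod_eq_iff) blast

lemma ping_pong_word_maps_into:
  assumes ping: "\<And>l s. s \<noteq> (fst l, \<not> snd l) \<Longrightarrow> letter_eval a b l ` X s \<subseteq> X l"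
  shows "w \<noteq> [] \<Longrightarrow> reduced_word w \<Longrightarrow> s \<noteq> (fst (last w), \<not> snd (last w))
    \<Longrightarrow> word_eval a b w ` X s \<subseteq> X (hd w)"
proof (induction w rule: induct_list012)
  case (3 l l' w)
  have "word_eval a b (l' # w) ` X s \<subseteq> X l'"
    using "3.IH"(2) "3.prems" by (simp add: reduced_word_Cons_Cons)
  moreover have "letter_eval a b l ` X l' \<subseteq> X l"
    using ping "3.prems"(2) by (simp add: reduced_word_Cons_Cons)
  ultimately show ?case by (auto simp: image_comp [symmetric])
qed (use ping in auto)

theorem ping_pong:
  fixes X :: "bool \<times> bool \<Rightarrow> 'a set"
  assumes disjoint: "\<And>s t. s \<noteq> t \<Longrightarrow> X s \<inter> X t = {}"
    and nonempty: "\<And>s. X s \<noteq> {}"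
    and ping: "\<And>l s. s \<noteq> (fst l, \<not> snd l) \<Longrightarrow> letter_eval a b l ` X s \<subseteq> X l"
    and w: "w \<noteq> []" "reduced_word w"
  shows "word_eval a b w \<noteq> id"
proof
  assume id: "word_eval a b w = id"
  obtain s where s: "s \<noteq> hd w" "s \<noteq> (fst (last w), \<not> snd (last w))"
    by (metis (full_types) prod.inject surj_pair)
  have "X s \<subseteq> X (hd w)"
    using ping_pong_word_maps_into[OF ping w s(2)] id by simp
  with disjoint[OF s(1)] nonempty[of s] show False by blast
qed

definition sector :: "bool \<times> bool \<Rightarrow> real \<Rightarrow> real \<Rightarrow> bool" where
  "sector l a b \<longleftrightarrow> (if fst l then \<bar>b\<bar> < \<bar>a\<bar> else \<bar>a\<bar> < \<bar>b\<bar>)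
     \<and> sgn b = (if snd l then sgn a else - sgn a)"

lemma sector_unique: "sector s a b \<Longrightarrow> sector t a b \<Longrightarrow> s = t"
  by (auto simp: sector_def prod_eq_iff sgn_if split: if_splits)

lemma sector_exists: "\<exists>a b. sector l a b"
proof -
  obtain g e where l: "l = (g, e)" by fastforce
  have "sector l (if g then 2 else 1) ((if e then 1 else -1) * (if g then 1 else 2))"
    by (auto simp: sector_def l)
  then show ?thesis by blast
qed

lemma sector_uminus: "sector (g, e) a (- b) \<longleftrightarrow> sector (g, \<not> e) a b"
  by (auto simp: sector_def sgn_minus)

lemma sector_swap: "sector (g, e) a b \<longleftrightarrow> sector (\<not> g, e) b a"
  by (auto simp: sector_def)

lemma sector_shear_positive:
  assumes "sector s a b" "s \<noteq> (True, False)"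
  shows "sector (True, True) (a + 2 * b) b"
  using assms by (auto simp: sector_def prod_eq_iff sgn_if abs_if split: if_splits)

lemma sector_shear_horizontal:
  assumes "sector s a b" "s \<noteq> (True, \<not> e)"
  shows "sector (True, e) (a + 2 * (if e then b else - b)) b"
proof (cases e)
  case True
  then show ?thesis using sector_shear_positive[OF assms(1)] assms(2) by simp
next
  case False
  obtain g e' where s: "s = (g, e')" by fastforce
  have "sector (g, \<not> e') a (- b)" using assms(1) by (simp add: s sector_uminus)
  then have "sector (True, True) (a + 2 * - b) (- b)"
    by (rule sector_shear_positive) (use assms(2) False s in auto)
  then show ?thesis using False by (simp add: sector_uminus)
qed

lemma sector_shear_vertical:
  assumes "sector s a b" "s \<noteq> (False, \<not> e)"
  shows "sector (False, e) a (b + 2 * (if e then a else - a))"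
proof -
  obtain g e' where s: "s = (g, e')" by fastforce
  have "sector (\<not> g, e') b a" using assms(1) by (simp add: s sector_swap[of g])
  then have "sector (True, e) (b + 2 * (if e then a else - a)) a"
    by (rule sector_shear_horizontal) (use assms(2) s in auto)
  then show ?thesis by (simp add: sector_swap[of False])
qed

lemma odd_strict_mono_abs_sgn:
  fixes \<sigma> :: "real \<Rightarrow> real"
  assumes "strict_mono \<sigma>" "\<And>x. \<sigma> (- x) = - \<sigma> x"
  shows "\<bar>\<sigma> a\<bar> = \<sigma> \<bar>a\<bar>" and "sgn (\<sigma> a) = sgn a"
proof -
  have zero: "\<sigma> 0 = 0" using assms(2)[of 0] by simp
  have "\<sigma> a < 0 \<longleftrightarrow> a < 0" "0 < \<sigma> a \<longleftrightarrow> 0 < a"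
    using strict_mono_less[OF assms(1)] zero by metis+
  then show "\<bar>\<sigma> a\<bar> = \<sigma> \<bar>a\<bar>" "sgn (\<sigma> a) = sgn a"
    using assms(2)[of a] zero by (auto simp: abs_if sgn_if)
qed

lemma sector_odd_strict_mono:
  fixes \<sigma> :: "real \<Rightarrow> real"
  assumes "strict_mono \<sigma>" "\<And>x. \<sigma> (- x) = - \<sigma> x"
  shows "sector l (\<sigma> a) (\<sigma> b) \<longleftrightarrow> sector l a b"
  using odd_strict_mono_abs_sgn[OF assms] strict_mono_less[OF assms(1)]
  by (simp add: sector_def)

lemma inv_shear_horizontal:
  "inv (\<lambda>(x, y). (x + f y, y)) = (\<lambda>(x :: 'a :: ab_group_add, y :: 'b). (x - f y, y))"
  by (rule inv_unique_comp) auto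

lemma inv_shear_vertical:
  "inv (\<lambda>(x, y). (x, y + f x)) = (\<lambda>(x :: 'a, y :: 'b :: ab_group_add). (x, y - f x))"
  by (rule inv_unique_comp) auto

lemma bij_shear_horizontal: "bij (\<lambda>(x, y). (x + f y, y) :: 'a :: ab_group_add \<times> 'b)"
  by (rule o_bij[where g = "\<lambda>(x, y). (x - f y, y)"]) auto

lemma bij_shear_vertical: "bij (\<lambda>(x, y). (x, y + f x) :: 'a \<times> 'b :: ab_group_add)"
  by (rule o_bij[where g = "\<lambda>(x, y). (x, y - f x)"]) auto

lemma h_sigma_square: "h_sigma \<sigma> ^^ 2 = (\<lambda>(x, y). (x + 2 * inv \<sigma> y, y))"
  by (auto simp: numeral_2_eq_2 h_sigma_def)

lemma v_sigma_square: "v_sigma \<sigma> ^^ 2 = (\<lambda>(x, y). (x, y + 2 * \<sigma> x))"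
  by (auto simp: numeral_2_eq_2 v_sigma_def)

definition sector_set :: "(real \<Rightarrow> real) \<Rightarrow> bool \<times> bool \<Rightarrow> (real \<times> real) set" where
  "sector_set \<sigma> l = {(x, y). sector l (\<sigma> x) y}"

lemma sector_set_ping_pong:
  fixes \<sigma> :: "real \<Rightarrow> real"
  assumes mono: "strict_mono \<sigma>" and odd: "\<And>x. \<sigma> (- x) = - \<sigma> x" and "surj \<sigma>"
    and s: "s \<noteq> (fst l, \<not> snd l)"
  shows "letter_eval (h_sigma \<sigma> ^^ 2) (v_sigma \<sigma> ^^ 2) l ` sector_set \<sigma> s \<subseteq> sector_set \<sigma> l"
proof (rule image_subsetI)
  fix p assume "p \<in> sector_set \<sigma> s"
  then obtain x y where p: "p = (x, y)" and xy: "sector s (\<sigma> x) y"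
    by (auto simp: sector_set_def)
  obtain g e where l: "l = (g, e)" by fastforce
  show "letter_eval (h_sigma \<sigma> ^^ 2) (v_sigma \<sigma> ^^ 2) l p \<in> sector_set \<sigma> l"
  proof (cases g)
    case True
    obtain u where y: "y = \<sigma> u" using \<open>surj \<sigma>\<close> by (metis surjD)
    have inv_u: "inv \<sigma> (\<sigma> u) = u" by (simp add: strict_mono_imp_inj_on[OF mono])
    have "sector s x u" using xy by (simp add: y sector_odd_strict_mono[OF mono odd])
    then have "sector l (x + 2 * (if e then u else - u)) u"
      using sector_shear_horizontal s by (simp add: l True)
    then show ?thesis
      by (cases e) (simp_all add: Let_def p l True y inv_u letter_eval_def h_sigma_square
          inv_shear_horizontal sector_set_def sector_odd_strict_mono[OF mono odd])
  next
    case False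
    have "sector l (\<sigma> x) (y + 2 * (if e then \<sigma> x else - \<sigma> x))"
      using sector_shear_vertical[OF xy] s by (simp add: l False)
    then show ?thesis
      by (cases e) (simp_all add: Let_def p l False letter_eval_def v_sigma_square
          inv_shear_vertical sector_set_def)
  qed
qed

theorem proposition1:
  fixes \<sigma> :: "real \<Rightarrow> real"
  assumes "strict_mono \<sigma>"
    and "\<And>x. \<sigma> (- x) = - \<sigma> x"
    and "\<exists>\<tau>. homeomorphism UNIV UNIV \<sigma> \<tau>"
  shows "freely_generate (h_sigma \<sigma> ^^ 2) (v_sigma \<sigma> ^^ 2)"
proof -
  have surj: "surj \<sigma>" using assms(3) by (auto simp: homeomorphism_def)
  have disjoint: "sector_set \<sigma> s \<inter> sector_set \<sigma> t = {}" if "s \<noteq> t" for s t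
    using sector_unique that by (fastforce simp: sector_set_def)
  have nonempty: "sector_set \<sigma> l \<noteq> {}" for l
  proof -
    obtain a b where "sector l a b" using sector_exists by blast
    then have "(inv \<sigma> a, b) \<in> sector_set \<sigma> l"
      by (simp add: sector_set_def surj_f_inv_f[OF surj])
    then show ?thesis by blast
  qed
  have "bij (h_sigma \<sigma> ^^ 2)" "bij (v_sigma \<sigma> ^^ 2)"
    by (simp_all add: h_sigma_square v_sigma_square bij_shear_horizontal bij_shear_vertical)
  then show ?thesis
    using ping_pong[OF disjoint nonempty sector_set_ping_pong[OF assms(1,2) surj]]
    by (simp add: freely_generate_def)
qed

end
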